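(* Fix $\beta=(\beta_1,\beta_2)\in\mathbb{R}^2$ with $\beta_1>\beta_2$. Let $P_\sigma:=\{(S_1,S_2)\in\mathbb{R}^2: S_1+S_2\le 1\}$, $I:=1-S_1-S_2$, $\mathcal{P}:=\{(X,I)\in\mathbb{R}^2: I\ge 0\}$, and $\varphi_\beta:P_\sigma\to\mathcal{P}$, $\varphi_\beta(S_1,S_2)=(\beta_1S_1+\beta_2S_2,\;1-S_1-S_2)$. For smooth functions $\Omega_1,\Omega_2:P_\sigma\to\mathbb{R}$ and reals $\gamma_1,\gamma_2$ with $\gamma_1+\gamma_2=1$, let $F_{(\Omega,\gamma)}$ be the vector field on $P_\sigma$ given by $$\dot S_1=-\beta_1S_1I-\Omega_1S_1+\Omega_2S_2+\gamma_1 I,\qquad \dot S_2=-\beta_2S_2I+\Omega_1S_1-\Omega_2S_2+\gamma_2 I .$$ For $f\in C^\infty(\mathcal{P})$ let $V_f:=f\,\partial_X+(X-1)I\,\partial_I$ (i.e. the system $\dot X=f(X,I)$, $\dot I=(X-1)I$). Then: (i) For every such $(\Omega,\gamma)$ one has $(\varphi_\beta)_*F_{(\Omega,\gamma)}=V_f$, where $$f(X,I)=\lambda I+(1-I)P(X,I)+XQ(X,I),\quad \lambda=\beta_1\gamma_1+\beta_2\gamma_2,$$ $$P=(\beta_1\Omega_2+\beta_2\Omega_1+\beta_1\beta_2 I)\circ\varphi_\beta^{-1},\qquad Q=-(\Omega_1+\Omega_2+(\beta_1+\beta_2)I)\circ\varphi_\beta^{-1}.$$ (ii) The assignment $F_{(\Omega,\gamma)}\mapsto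 f$ is a bijection from the set of all vector fields $F_{(\Omega,\gamma)}$ (for this fixed $\beta$, all smooth $\Omega_1,\Omega_2$ and all $\gamma_1+\gamma_2=1$) onto $C^\infty(\mathcal{P})$. (iii) For every $f\in C^\infty(\mathcal{P})$ put $\lambda_f:=f(0,1)$, $Q_f(X,I):=(f(X,I)-f(0,I))/X$, $P_f(I):=(f(0,I)-f(0,1)I)/(1-I)$ (smoothly extended to $X=0$, resp. $I=1$). Then there is exactly one pair $(\Omega,\gamma)$ with $\gamma_1+\gamma_2=1$ such that $(\beta_1\Omega_2+\beta_2\Omega_1+\beta_1\beta_2I)\circ\varphi_\beta^{-1}$ does not depend on $X$ and $(\varphi_\beta)_*F_{(\Omega,\gamma)}=V_f$; it is given by $$\Omega_1=\frac{P_f+\beta_1Q_f+\beta_1^2I}{\beta_2-\beta_1}\circ\varphi_\beta,\quad \Omega_2=\frac{P_f+\beta_2Q_f+\beta_2^2I}{\beta_1-\beta_2}\circ\varphi_\beta,\quad \gamma_1=\frac{\lambda_f-\beta_2}{\beta_1-\beta_2},\ \gamma_2=\frac{\beta_1-\lambda_f}{\beta_1-\beta_2}.$$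
   Context: $(\varphi_\beta)_*F$ denotes the push-forward $D\varphi_\beta\circ F\circ\varphi_\beta^{-1}$ of a vector field $F$. The system $F_{(\Omega,\gamma)}$ is the "SSISS model" (two susceptible compartments $S_1,S_2$, one infectious compartment $I$, recovery rate normalized to $1$), and $X=\beta_1S_1+\beta_2S_2$ is the replacement number; the system $V_f$ is called a replacement number dynamics (RND). *)

theory Defs
  imports "HOL-Analysis.Analysis"
begin

text \<open>C-infinity on an open set: all iterated partial derivatives (indexed by lists of
  basis vectors) exist; D l is the partial derivative along the directions in l.\<close>
definition smooth_open :: "'a::euclidean_space set \<Rightarrow> ('a \<Rightarrow> real) \<Rightarrow> bool" where
  "smooth_open U f \<longleftrightarrow> (\<exists>D :: 'a list \<Rightarrow> 'a \<Rightarrow> real.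
      (\<forall>x\<in>U. D [] x = f x) \<and>
      (\<forall>l. \<forall>x\<in>U. (D l has_derivative (\<lambda>h. \<Sum>b\<in>Basis. (h \<bullet> b) * D (b # l) x)) (at x)))"

definition smooth_on :: "'a::euclidean_space set \<Rightarrow> ('a \<Rightarrow> real) \<Rightarrow> bool" where
  "smooth_on S f \<longleftrightarrow> (\<exists>U g. open U \<and> S \<subseteq> U \<and> smooth_open U g \<and> (\<forall>x\<in>S. g x = f x))"

definition Psig :: "(real \<times> real) set" where
  "Psig = {(S1, S2). S1 + S2 \<le> 1}"

definition Pcal :: "(real \<times> real) set" where
  "Pcal = {(X, I). I \<ge> 0}"

definition Ifun :: "real \<times> real \<Rightarrow> real" where
  "Ifun S = 1 - fst S - snd S"

definition phi :: "real \<Rightarrow> real \<Rightarrow> real \<times> real \<Rightarrow> real \<times> real" where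
  "phi b1 b2 S = (b1 * fst S + b2 * snd S, 1 - fst S - snd S)"

definition phi_inv :: "real \<Rightarrow> real \<Rightarrow> real \<times> real \<Rightarrow> real \<times> real" where
  "phi_inv b1 b2 = inv_into Psig (phi b1 b2)"

definition pushforward ::
  "('a::real_normed_vector \<Rightarrow> 'b::real_normed_vector) \<Rightarrow> ('b \<Rightarrow> 'a) \<Rightarrow> ('a \<Rightarrow> 'a) \<Rightarrow> 'b \<Rightarrow> 'b" where
  "pushforward ph ps F y = frechet_derivative ph (at (ps y)) (F (ps y))"

definition Fvf :: "real \<Rightarrow> real \<Rightarrow> (real \<times> real \<Rightarrow> real) \<Rightarrow> (real \<times> real \<Rightarrow> real)
    \<Rightarrow> real \<Rightarrow> real \<Rightarrow> real \<times> real \<Rightarrow> real \<times> real" where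
  "Fvf b1 b2 Om1 Om2 g1 g2 S =
     (let S1 = fst S; S2 = snd S; I = 1 - S1 - S2 in
      (- b1 * S1 * I - Om1 S * S1 + Om2 S * S2 + g1 * I,
       - b2 * S2 * I + Om1 S * S1 - Om2 S * S2 + g2 * I))"

definition Vf :: "(real \<times> real \<Rightarrow> real) \<Rightarrow> real \<times> real \<Rightarrow> real \<times> real" where
  "Vf f y = (f y, (fst y - 1) * snd y)"

definition admissible :: "(real \<times> real \<Rightarrow> real) \<Rightarrow> (real \<times> real \<Rightarrow> real) \<Rightarrow> real \<Rightarrow> real \<Rightarrow> bool" where
  "admissible Om1 Om2 g1 g2 \<longleftrightarrow> smooth_on Psig Om1 \<and> smooth_on Psig Om2 \<and> g1 + g2 = 1"

definition Pfun :: "real \<Rightarrow> real \<Rightarrow> (real \<times> real \<Rightarrow> real) \<Rightarrow> (real \<times> real \<Rightarrow> real) \<Rightarrow> real \<times> real \<Rightarrow> real" where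
  "Pfun b1 b2 Om1 Om2 = (\<lambda>S. b1 * Om2 S + b2 * Om1 S + b1 * b2 * Ifun S) \<circ> phi_inv b1 b2"

definition Qfun :: "real \<Rightarrow> real \<Rightarrow> (real \<times> real \<Rightarrow> real) \<Rightarrow> (real \<times> real \<Rightarrow> real) \<Rightarrow> real \<times> real \<Rightarrow> real" where
  "Qfun b1 b2 Om1 Om2 = (\<lambda>S. - (Om1 S + Om2 S + (b1 + b2) * Ifun S)) \<circ> phi_inv b1 b2"

definition fmap :: "real \<Rightarrow> real \<Rightarrow> (real \<times> real \<Rightarrow> real) \<Rightarrow> (real \<times> real \<Rightarrow> real)
    \<Rightarrow> real \<Rightarrow> real \<Rightarrow> real \<times> real \<Rightarrow> real" where
  "fmap b1 b2 Om1 Om2 g1 g2 y =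
     (b1 * g1 + b2 * g2) * snd y + (1 - snd y) * Pfun b1 b2 Om1 Om2 y + fst y * Qfun b1 b2 Om1 Om2 y"

end

theory Submission
  imports Defs
begin

text \<open>Since phi is an affine isomorphism with explicit inverse psi, the push-forward of F is
  (b1 F1 + b2 F2, - F1 - F2). Because gamma1 + gamma2 = 1, the second component is always
  (X - 1) I, and regrouping the first one gives f = lambda I + (1 - I) P + X Q. Since b1 differs
  from b2, (F1, F2) is recovered from (b1 F1 + b2 F2, F1 + F2), which gives injectivity.
  Conversely, every smooth f can be written as f = f(0,1) I + (1 - I) P_f(I) + X Q_f(X, I), where
  Hadamard's lemma (a difference quotient is an average of a derivative) makes P_f and Q_f smooth.
  The map from (Omega, gamma) to (P, Q, lambda) is an invertible linear system, so solving it gives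
  the unique preimage whose P does not depend on X. Such a decomposition is unique: off the lines
  I = 1 and X = 0 the parts P and Q are quotients, and continuity extends this to the lines.\<close>

section \<open>Smooth functions\<close>

definition has_partials :: "'a::euclidean_space set \<Rightarrow> ('a \<Rightarrow> real) \<Rightarrow> ('a \<Rightarrow> 'a \<Rightarrow> real) \<Rightarrow> bool" where
  "has_partials U f G \<longleftrightarrow> (\<forall>x\<in>U. (f has_derivative (\<lambda>h. \<Sum>b\<in>Basis. (h \<bullet> b) * G b x)) (at x))"

lemma smooth_open_partials:
  assumes "open U" "smooth_open U f"
  obtains G where "\<And>b. smooth_open U (G b)" "has_partials U f G"
proof -
  obtain D where D0: "\<forall>x\<in>U. D [] x = f x"
    and D: "\<forall>l. \<forall>x\<in>U. (D l has_derivative (\<lambda>h. \<Sum>b\<in>Basis. (h \<bullet> b) * D (b # l) x)) (at x)"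
    using assms(2) unfolding smooth_open_def by blast
  have "smooth_open U (D [b])" for b
    unfolding smooth_open_def using D by (intro exI[of _ "\<lambda>l. D (l @ [b])"]) auto
  moreover have "has_partials U f (\<lambda>b. D [b])"
    unfolding has_partials_def
    using D D0 by (auto intro: has_derivative_transform_within_open[where s = U, OF _ assms(1)])
  ultimately show thesis by (rule that)
qed

lemma smooth_open_coinduct:
  assumes "f \<in> C"
    and step: "\<And>g. g \<in> C \<Longrightarrow> \<exists>G. (\<forall>b\<in>Basis. G b \<in> C) \<and> has_partials U g G"
  shows "smooth_open U f"
proof -
  have "\<forall>g. \<exists>G. g \<in> C \<longrightarrow> (\<forall>b\<in>Basis. G b \<in> C) \<and> has_partials U g G"
    using step by blast
  then obtain Gs where Gs: "\<And>g. g \<in> C \<Longrightarrow> (\<forall>b\<in>Basis. Gs g b \<in> C) \<and> has_partials U g (Gs g)"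
    by (metis choice)
  define Gp where "Gp g b = (if b \<in> Basis then Gs g b else g)" for g b
  have "foldl Gp g l \<in> C" if "g \<in> C" for g l
    using that by (induction l arbitrary: g) (auto simp: Gp_def Gs)
  then have partials: "has_partials U (foldl Gp f l) (Gs (foldl Gp f l))" for l
    using Gs assms(1) by blast
  show ?thesis
    unfolding smooth_open_def
  proof (intro exI[of _ "\<lambda>l. foldl Gp f (rev l)"] conjI ballI allI)
    fix l x assume "x \<in> U"
    then have "(foldl Gp f (rev l) has_derivative
        (\<lambda>h. \<Sum>b\<in>Basis. h \<bullet> b * Gs (foldl Gp f (rev l)) b x)) (at x)"
      using partials unfolding has_partials_def by blast
    moreover have "Gs (foldl Gp f (rev l)) b = foldl Gp f (rev (b # l))" if "b \<in> Basis" for b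
      using that by (simp add: Gp_def)
    ultimately show "(foldl Gp f (rev l) has_derivative
        (\<lambda>h. \<Sum>b\<in>Basis. h \<bullet> b * foldl Gp f (rev (b # l)) x)) (at x)"
      by (simp cong: sum.cong)
  qed simp
qed

lemma smooth_open_affine: "smooth_open U (\<lambda>x. x \<bullet> a + (c::real))"
proof (rule smooth_open_coinduct[where C = "{f. \<exists>a c. f = (\<lambda>x. x \<bullet> a + c)}"])
  fix g :: "'a \<Rightarrow> real" assume "g \<in> {f. \<exists>a c. f = (\<lambda>x. x \<bullet> a + c)}"
  then obtain a c where g: "g = (\<lambda>x. x \<bullet> a + c)" by blast
  have "(\<lambda>h. h \<bullet> a + 0) = (\<lambda>h. \<Sum>b\<in>Basis. h \<bullet> b * (b \<bullet> a))"
    by (rule ext) (subst euclidean_inner, simp add: inner_commute[of a])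
  moreover have "(g has_derivative (\<lambda>h. h \<bullet> a + 0)) (at x)" for x
    unfolding g by (intro has_derivative_add bounded_linear_imp_has_derivative
        bounded_linear_inner_left has_derivative_const)
  ultimately have "has_partials U g (\<lambda>b x. x \<bullet> 0 + b \<bullet> a)"
    unfolding has_partials_def by simp
  moreover have "(\<lambda>x. x \<bullet> 0 + b \<bullet> a) \<in> {f. \<exists>a c. f = (\<lambda>x. x \<bullet> a + c)}" for b :: 'a
    by blast
  ultimately show "\<exists>G. (\<forall>b\<in>Basis. G b \<in> {f. \<exists>a c. f = (\<lambda>x. x \<bullet> a + c)}) \<and> has_partials U g G"
    by (intro exI[of _ "\<lambda>b x. x \<bullet> 0 + b \<bullet> a"] conjI ballI)
qed blast

lemma smooth_open_const: "smooth_open U (\<lambda>x. c :: real)"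
  using smooth_open_affine[of U 0 c] by simp

lemma has_partials_add:
  assumes "has_partials U f F" "has_partials U g G"
  shows "has_partials U (\<lambda>x. f x + g x) (\<lambda>b x. F b x + G b x)"
  unfolding has_partials_def
proof
  fix x assume "x \<in> U"
  with assms have "((\<lambda>x. f x + g x) has_derivative
      (\<lambda>h. (\<Sum>b\<in>Basis. h \<bullet> b * F b x) + (\<Sum>b\<in>Basis. h \<bullet> b * G b x))) (at x)"
    unfolding has_partials_def by (intro has_derivative_add) auto
  then show "((\<lambda>x. f x + g x) has_derivative (\<lambda>h. \<Sum>b\<in>Basis. h \<bullet> b * (F b x + G b x))) (at x)"
    by (simp add: distrib_left sum.distrib)
qed

lemma has_partials_mult:
  assumes "has_partials U f F" "has_partials U g G"
  shows "has_partials U (\<lambda>x. f x * g x) (\<lambda>b x. F b x * g x + f x * G b x)"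
  unfolding has_partials_def
proof
  fix x assume x: "x \<in> U"
  have "(\<lambda>h. \<Sum>b\<in>Basis. h \<bullet> b * (F b x * g x + f x * G b x))
      = (\<lambda>h. f x * (\<Sum>b\<in>Basis. h \<bullet> b * G b x) + (\<Sum>b\<in>Basis. h \<bullet> b * F b x) * g x)"
    by (simp add: fun_eq_iff algebra_simps sum.distrib sum_distrib_left sum_distrib_right)
  then show "((\<lambda>x. f x * g x) has_derivative
      (\<lambda>h. \<Sum>b\<in>Basis. h \<bullet> b * (F b x * g x + f x * G b x))) (at x)"
    using has_derivative_mult[OF assms(1)[unfolded has_partials_def, rule_format, OF x]
        assms(2)[unfolded has_partials_def, rule_format, OF x]] by (simp only:)
qed

text \<open>Closed under partial derivatives by the sum and product rules, so coinduction shows that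
  sums and products of smooth functions are smooth.\<close>
inductive_set smooth_ring for U :: "'a::euclidean_space set" where
  smooth: "smooth_open U f \<Longrightarrow> f \<in> smooth_ring U"
| add: "f \<in> smooth_ring U \<Longrightarrow> g \<in> smooth_ring U \<Longrightarrow> (\<lambda>x. f x + g x) \<in> smooth_ring U"
| mult: "f \<in> smooth_ring U \<Longrightarrow> g \<in> smooth_ring U \<Longrightarrow> (\<lambda>x. f x * g x) \<in> smooth_ring U"

lemma smooth_ring_partials:
  assumes "open U" "g \<in> smooth_ring U"
  shows "\<exists>G. (\<forall>b\<in>Basis. G b \<in> smooth_ring U) \<and> has_partials U g G"
  using assms(2)
proof induction
  case (smooth f)
  obtain G where "\<And>b. smooth_open U (G b)" "has_partials U f G"
    using smooth_open_partials[OF assms(1) smooth] by blast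
  then show ?case by (intro exI[of _ G]) (simp add: smooth_ring.smooth)
next
  case (add f g)
  then obtain F G where F: "\<forall>b\<in>Basis. F b \<in> smooth_ring U" "has_partials U f F"
    and G: "\<forall>b\<in>Basis. G b \<in> smooth_ring U" "has_partials U g G" by blast
  have "(\<lambda>x. F b x + G b x) \<in> smooth_ring U" if "b \<in> Basis" for b
    using that F(1) G(1) by (simp add: smooth_ring.add)
  with has_partials_add[OF F(2) G(2)] show ?case
    by (intro exI[of _ "\<lambda>b x. F b x + G b x"]) simp
next
  case (mult f g)
  then obtain F G where F: "\<forall>b\<in>Basis. F b \<in> smooth_ring U" "has_partials U f F"
    and G: "\<forall>b\<in>Basis. G b \<in> smooth_ring U" "has_partials U g G" by blast
  have "(\<lambda>x. F b x * g x + f x * G b x) \<in> smooth_ring U" if "b \<in> Basis" for b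
  proof -
    have "F b \<in> smooth_ring U" "G b \<in> smooth_ring U" using that F(1) G(1) by auto
    then have "(\<lambda>x. F b x * g x) \<in> smooth_ring U" "(\<lambda>x. f x * G b x) \<in> smooth_ring U"
      using mult.hyps by (auto intro: smooth_ring.mult)
    then show ?thesis by (rule smooth_ring.add)
  qed
  with has_partials_mult[OF F(2) G(2)] show ?case
    by (intro exI[of _ "\<lambda>b x. F b x * g x + f x * G b x"]) simp
qed

lemma smooth_open_add:
  "open U \<Longrightarrow> smooth_open U f \<Longrightarrow> smooth_open U g \<Longrightarrow> smooth_open U (\<lambda>x. f x + g x)"
  by (rule smooth_open_coinduct[where C = "smooth_ring U"])
    (auto intro: smooth_ring.intros smooth_ring_partials)

lemma smooth_open_mult:
  "open U \<Longrightarrow> smooth_open U f \<Longrightarrow> smooth_open U g \<Longrightarrow> smooth_open U (\<lambda>x. f x * g x)"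
  by (rule smooth_open_coinduct[where C = "smooth_ring U"])
    (auto intro: smooth_ring.intros smooth_ring_partials)

lemma smooth_open_sum:
  assumes "open U" "finite S" "\<And>i. i \<in> S \<Longrightarrow> smooth_open U (f i)"
  shows "smooth_open U (\<lambda>x. \<Sum>i\<in>S. f i x)"
  using assms(2,3) by (induction S rule: finite_induct) (simp_all add: smooth_open_add smooth_open_const assms(1))

lemma smooth_open_subset: "V \<subseteq> U \<Longrightarrow> smooth_open U f \<Longrightarrow> smooth_open V f"
  unfolding smooth_open_def by blast

lemma sum_Basis_linear_inner:
  assumes "linear A"
  shows "(\<Sum>b'\<in>Basis. (A h \<bullet> b') * c b') = (\<Sum>b\<in>Basis. (h \<bullet> b) * (\<Sum>b'\<in>Basis. (A b \<bullet> b') * c b'))"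
proof -
  have "A h = (\<Sum>b\<in>Basis. (h \<bullet> b) *\<^sub>R A b)"
    by (subst euclidean_representation[of h, symmetric])
      (simp only: linear_sum[OF assms] linear_scale[OF assms])
  then have Ah: "A h \<bullet> b' = (\<Sum>b\<in>Basis. (h \<bullet> b) * (A b \<bullet> b'))" for b'
    by (simp add: inner_sum_left)
  show ?thesis
    unfolding Ah sum_distrib_left sum_distrib_right by (subst sum.swap) (simp add: mult.assoc)
qed

lemma smooth_open_compose_affine:
  fixes k :: "'b::euclidean_space \<Rightarrow> real" and M :: "'a::euclidean_space \<Rightarrow> 'b"
  assumes V: "open V" and k: "smooth_open V k" and M: "\<And>x. (M has_derivative A) (at x)"
    and UV: "M ` U \<subseteq> V"
  shows "smooth_open U (\<lambda>x. k (M x))"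
proof (rule smooth_open_coinduct[where C = "{\<lambda>x. k' (M x) | k'. smooth_open V k'}"])
  fix g assume "g \<in> {\<lambda>x. k' (M x) | k'. smooth_open V k'}"
  then obtain k' where g: "g = (\<lambda>x. k' (M x))" and k': "smooth_open V k'" by blast
  obtain G where G: "\<And>b. smooth_open V (G b)" "has_partials V k' G"
    using smooth_open_partials[OF V k'] by blast
  define H where "H b y = (\<Sum>b'\<in>Basis. (A b \<bullet> b') * G b' y)" for b y
  have "smooth_open V (H b)" for b
    unfolding H_def by (intro smooth_open_sum smooth_open_mult smooth_open_const G(1) V finite_Basis)
  moreover have "has_partials U g (\<lambda>b x. H b (M x))"
    unfolding has_partials_def
  proof
    fix x assume "x \<in> U"
    then have "(k' has_derivative (\<lambda>w. \<Sum>b'\<in>Basis. (w \<bullet> b') * G b' (M x))) (at (M x))"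
      using G(2) UV unfolding has_partials_def by blast
    from has_derivative_compose[OF M this]
    have "(g has_derivative (\<lambda>h. \<Sum>b'\<in>Basis. (A h \<bullet> b') * G b' (M x))) (at x)"
      unfolding g .
    moreover have "linear A"
      using M has_derivative_linear by blast
    then have "(\<lambda>h. \<Sum>b'\<in>Basis. (A h \<bullet> b') * G b' (M x)) = (\<lambda>h. \<Sum>b\<in>Basis. (h \<bullet> b) * H b (M x))"
      unfolding H_def by (intro ext sum_Basis_linear_inner)
    ultimately show "(g has_derivative (\<lambda>h. \<Sum>b\<in>Basis. (h \<bullet> b) * H b (M x))) (at x)"
      by (simp only:)
  qed
  ultimately show "\<exists>G. (\<forall>b\<in>Basis. G b \<in> {\<lambda>x. k' (M x) | k'. smooth_open V k'}) \<and> has_partials U g G"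
    by (intro exI[of _ "\<lambda>b x. H b (M x)"] conjI ballI) blast+
qed (use k in blast)

lemma smooth_open_imp_continuous_on:
  assumes "open U" "smooth_open U f"
  shows "continuous_on U f"
proof -
  obtain G where "has_partials U f G"
    using smooth_open_partials[OF assms] by blast
  then show ?thesis
    unfolding has_partials_def
    by (meson continuous_at_imp_continuous_on has_derivative_continuous)
qed

lemma smooth_on_cong: "smooth_on S f \<Longrightarrow> (\<And>x. x \<in> S \<Longrightarrow> f x = g x) \<Longrightarrow> smooth_on S g"
  unfolding smooth_on_def by metis

lemma smooth_on_affine: "smooth_on S (\<lambda>x. x \<bullet> a + (c::real))"
  unfolding smooth_on_def using smooth_open_affine by blast

lemma smooth_on_const: "smooth_on S (\<lambda>x. c :: real)"
  using smooth_on_affine[of S 0 c] by simp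

lemma smooth_on_fst: "smooth_on S (\<lambda>x::real \<times> real. fst x)"
  using smooth_on_affine[of S "(1, 0)" 0] by (simp add: inner_prod_def)

lemma smooth_on_snd: "smooth_on S (\<lambda>x::real \<times> real. snd x)"
  using smooth_on_affine[of S "(0, 1)" 0] by (simp add: inner_prod_def)

lemma smooth_on_add:
  assumes "smooth_on S f" "smooth_on S g"
  shows "smooth_on S (\<lambda>x. f x + g x)"
proof -
  obtain U f' V g' where "open U" "S \<subseteq> U" "smooth_open U f'" "\<forall>x\<in>S. f' x = f x"
    and "open V" "S \<subseteq> V" "smooth_open V g'" "\<forall>x\<in>S. g' x = g x"
    using assms unfolding smooth_on_def by metis
  then show ?thesis
    unfolding smooth_on_def
    by (intro exI[of _ "U \<inter> V"] exI[of _ "\<lambda>x. f' x + g' x"])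
      (auto intro: smooth_open_add smooth_open_subset)
qed

lemma smooth_on_mult:
  assumes "smooth_on S f" "smooth_on S g"
  shows "smooth_on S (\<lambda>x. f x * g x)"
proof -
  obtain U f' V g' where "open U" "S \<subseteq> U" "smooth_open U f'" "\<forall>x\<in>S. f' x = f x"
    and "open V" "S \<subseteq> V" "smooth_open V g'" "\<forall>x\<in>S. g' x = g x"
    using assms unfolding smooth_on_def by metis
  then show ?thesis
    unfolding smooth_on_def
    by (intro exI[of _ "U \<inter> V"] exI[of _ "\<lambda>x. f' x * g' x"])
      (auto intro: smooth_open_mult smooth_open_subset)
qed

lemma smooth_on_diff:
  assumes "smooth_on S f" "smooth_on S g"
  shows "smooth_on S (\<lambda>x. f x - g x)"
  using smooth_on_add[OF assms(1) smooth_on_mult[OF smooth_on_const assms(2)], of "-1"] by simp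

lemma smooth_on_uminus: "smooth_on S f \<Longrightarrow> smooth_on S (\<lambda>x. - f x)"
  using smooth_on_diff[OF smooth_on_const, of S f 0] by simp

lemma smooth_on_divide_const: "smooth_on S f \<Longrightarrow> smooth_on S (\<lambda>x. f x / c)"
  using smooth_on_mult[OF _ smooth_on_const, of S f "1 / c"] by simp

lemmas smooth_on_arith =
  smooth_on_const smooth_on_fst smooth_on_snd smooth_on_add smooth_on_mult smooth_on_diff
  smooth_on_uminus smooth_on_divide_const

lemma smooth_on_compose_affine:
  fixes k :: "'b::euclidean_space \<Rightarrow> real" and M :: "'a::euclidean_space \<Rightarrow> 'b"
  assumes "smooth_on T k" "\<And>x. (M has_derivative A) (at x)" "M ` S \<subseteq> T"
  shows "smooth_on S (\<lambda>x. k (M x))"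
proof -
  obtain V k' where V: "open V" "T \<subseteq> V" "smooth_open V k'" "\<forall>y\<in>T. k' y = k y"
    using assms(1) unfolding smooth_on_def by blast
  have "continuous_on UNIV M"
    using assms(2) by (meson continuous_at_imp_continuous_on has_derivative_continuous)
  then have "open (M -` V)"
    using V(1) by (simp add: open_vimage)
  moreover have "smooth_open (M -` V) (\<lambda>x. k' (M x))"
    using V by (intro smooth_open_compose_affine[OF _ _ assms(2)]) auto
  ultimately show ?thesis
    unfolding smooth_on_def using V(2,4) assms(3)
    by (intro exI[of _ "M -` V"] exI[of _ "\<lambda>x. k' (M x)"]) (auto simp: image_subset_iff subset_eq)
qed

lemma smooth_on_imp_continuous_on: "smooth_on S f \<Longrightarrow> continuous_on S f"
  unfolding smooth_on_def
  by (metis continuous_on_cong continuous_on_subset smooth_open_imp_continuous_on)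

section \<open>Hadamard's lemma\<close>

text \<open>Differentiating in X raises the power of t, so all k are needed to obtain a class that is
  closed under partial derivatives.\<close>
definition hadamard_integral :: "nat \<Rightarrow> (real \<times> real \<Rightarrow> real) \<Rightarrow> real \<times> real \<Rightarrow> real" where
  "hadamard_integral k h p = integral {0..1} (\<lambda>t. t ^ k * h (t * fst p, snd p))"

lemma open_segment_tube:
  fixes W :: "(real \<times> real) set"
  assumes "open W"
  shows "open {p. \<forall>t\<in>{0..1::real}. (t * fst p, snd p) \<in> W}"
  unfolding open_subopen[of "{p. \<forall>t\<in>{0..1::real}. (t * fst p, snd p) \<in> W}"]
proof
  fix p assume p: "p \<in> {p. \<forall>t\<in>{0..1::real}. (t * fst p, snd p) \<in> W}"
  define F where "F z = (snd z * fst (fst z), snd (fst z))" for z :: "(real \<times> real) \<times> real"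
  have open_pre: "open (F -` W)"
    unfolding F_def by (intro continuous_open_vimage[OF assms] continuous_intros)
  have slice: "{p} \<times> {0..1} \<subseteq> F -` W"
  proof
    fix z assume "z \<in> {p} \<times> {0..1::real}"
    then obtain t where "z = (p, t)" "t \<in> {0..1}" by blast
    then show "z \<in> F -` W" using p by (simp add: F_def)
  qed
  obtain T where T: "p \<in> T" "open T" "T \<times> {0..1} \<subseteq> F -` W"
    using Elementary_Topology.tube_lemma[OF compact_Icc open_pre slice] by blast
  have "T \<subseteq> {p. \<forall>t\<in>{0..1::real}. (t * fst p, snd p) \<in> W}"
  proof (intro subsetI CollectI ballI)
    fix q t assume "q \<in> T" "t \<in> {0..1::real}"
    then have "(q, t) \<in> F -` W" using T(3) by blast
    then show "(t * fst q, snd q) \<in> W" by (simp add: F_def)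
  qed
  with T show "\<exists>T. open T \<and> p \<in> T \<and> T \<subseteq> {p. \<forall>t\<in>{0..1::real}. (t * fst p, snd p) \<in> W}"
    by blast
qed

lemma continuous_on_segment_integrand:
  fixes h :: "real \<times> real \<Rightarrow> real"
  assumes "continuous_on W h" "\<And>p t. p \<in> U \<Longrightarrow> t \<in> {0..1} \<Longrightarrow> (t * fst p, snd p) \<in> W"
  shows "continuous_on (U \<times> {0..1}) (\<lambda>z. snd z ^ k * h (snd z * fst (fst z), snd (fst z)))"
proof -
  have "continuous_on (U \<times> {0..1}) (\<lambda>z. h (snd z * fst (fst z), snd (fst z)))"
    by (rule continuous_on_compose2[OF assms(1)]) (auto intro!: continuous_intros assms(2))
  then show ?thesis by (intro continuous_intros)
qed

lemma has_derivative_segment_integrand: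
  fixes h :: "real \<times> real \<Rightarrow> real"
  assumes "has_partials W h G" "(t * fst x, snd x) \<in> W"
  shows "((\<lambda>x. t ^ k * h (t * fst x, snd x)) has_derivative
    (\<lambda>v. t ^ Suc k * G (1, 0) (t * fst x, snd x) * fst v + t ^ k * G (0, 1) (t * fst x, snd x) * snd v))
    (at x within S)"
proof -
  have inner: "((\<lambda>x. (t * fst x, snd x)) has_derivative (\<lambda>v. (t * fst v, snd v))) (at x within S)"
    by (intro has_derivative_Pair has_derivative_mult_right has_derivative_fst has_derivative_snd
        has_derivative_ident)
  have outer: "(h has_derivative (\<lambda>w. \<Sum>b\<in>Basis. (w \<bullet> b) * G b (t * fst x, snd x)))
      (at (t * fst x, snd x))"
    using assms unfolding has_partials_def by blast
  have "((\<lambda>x. t ^ k * h (t * fst x, snd x)) has_derivative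
      (\<lambda>v. t ^ k * (\<Sum>b\<in>Basis. ((t * fst v, snd v) \<bullet> b) * G b (t * fst x, snd x)))) (at x within S)"
    using has_derivative_mult_right[OF has_derivative_compose[OF inner outer]] by simp
  then show ?thesis
    by (simp add: Basis_prod_def algebra_simps)
qed

lemma blinfun_apply_integral_fst_snd:
  fixes A B :: "real \<Rightarrow> real"
  assumes "A integrable_on S" "B integrable_on S"
  shows "blinfun_apply (integral S (\<lambda>t. A t *\<^sub>R Blinfun (fst :: real \<times> real \<Rightarrow> real) + B t *\<^sub>R Blinfun snd))
    = (\<lambda>v. integral S A * fst v + integral S B * snd v)"
proof
  fix v :: "real \<times> real"
  have "(\<lambda>t. A t *\<^sub>R Blinfun (fst :: real \<times> real \<Rightarrow> real) + B t *\<^sub>R Blinfun snd) integrable_on S"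
    using assms by (intro integrable_add integrable_on_scaleR_left)
  then have "blinfun_apply (integral S (\<lambda>t. A t *\<^sub>R Blinfun fst + B t *\<^sub>R Blinfun snd)) v
      = integral S (\<lambda>t. A t * fst v + B t * snd v)"
    by (simp add: blinfun_apply_integral blinfun.add_left blinfun.scaleR_left bounded_linear_Blinfun_apply
        bounded_linear_fst bounded_linear_snd)
  also have "\<dots> = integral S A * fst v + integral S B * snd v"
    using assms by (simp add: integral_add integrable_on_mult_left)
  finally show "blinfun_apply (integral S (\<lambda>t. A t *\<^sub>R Blinfun fst + B t *\<^sub>R Blinfun snd)) v
      = integral S A * fst v + integral S B * snd v" .
qed

lemma has_derivative_integral_param:
  fixes F A B :: "real \<times> real \<Rightarrow> real \<Rightarrow> real"
  assumes U: "open U" and x0: "x0 \<in> U"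
    and F: "\<And>x t. x \<in> U \<Longrightarrow> t \<in> {0..1} \<Longrightarrow>
      ((\<lambda>x. F x t) has_derivative (\<lambda>v. A x t * fst v + B x t * snd v)) (at x)"
    and cF: "continuous_on (U \<times> {0..1}) (\<lambda>z. F (fst z) (snd z))"
    and cA: "continuous_on (U \<times> {0..1}) (\<lambda>z. A (fst z) (snd z))"
    and cB: "continuous_on (U \<times> {0..1}) (\<lambda>z. B (fst z) (snd z))"
  shows "((\<lambda>x. integral {0..1} (F x)) has_derivative
    (\<lambda>v. integral {0..1} (A x0) * fst v + integral {0..1} (B x0) * snd v)) (at x0)"
proof -
  obtain r where r: "r > 0" "ball x0 r \<subseteq> U"
    using U x0 open_contains_ball by blast
  define D where "D x t = A x t *\<^sub>R Blinfun (fst :: real \<times> real \<Rightarrow> real) + B x t *\<^sub>R Blinfun snd"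
    for x t
  have D_apply: "blinfun_apply (D x t) = (\<lambda>v. A x t * fst v + B x t * snd v)" for x t
    by (simp add: fun_eq_iff D_def blinfun.add_left blinfun.scaleR_left bounded_linear_Blinfun_apply
        bounded_linear_fst bounded_linear_snd)
  have slice: "continuous_on {0..1} (\<lambda>t. K (x, t))"
    if "continuous_on (U \<times> {0..1}) K" "x \<in> U" for K :: "(real \<times> real) \<times> real \<Rightarrow> real" and x
    by (rule continuous_on_compose2[OF that(1)]) (use that(2) in \<open>auto intro!: continuous_intros\<close>)
  have "((\<lambda>x. integral (cbox 0 1) (F x)) has_derivative blinfun_apply (integral (cbox 0 1) (D x0)))
      (at x0 within ball x0 r)"
  proof (rule leibniz_rule[OF _ _ _ _ convex_ball])
    show "((\<lambda>x. F x t) has_derivative blinfun_apply (D x t)) (at x within ball x0 r)"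
      if "x \<in> ball x0 r" "t \<in> cbox 0 1" for x t
    proof -
      have "x \<in> U" "t \<in> {0..1}" using that r(2) by auto
      from F[OF this] show ?thesis unfolding D_apply by (rule has_derivative_at_withinI)
    qed
    show "F x integrable_on cbox 0 1" if "x \<in> ball x0 r" for x
    proof -
      have "continuous_on {0..1} (F x)"
        using slice[OF cF, of x] that r(2) by auto
      then show ?thesis by (simp add: integrable_continuous_interval)
    qed
    have "continuous_on (U \<times> {0..1}) (\<lambda>z. D (fst z) (snd z))"
      unfolding D_def by (intro continuous_intros cA cB)
    then show "continuous_on (ball x0 r \<times> cbox 0 1) (\<lambda>(x, t). D x t)"
      by (simp only: split_beta') (rule continuous_on_subset, use r(2) in auto)
  qed (use r in simp)
  then have "((\<lambda>x. integral {0..1} (F x)) has_derivative blinfun_apply (integral {0..1} (D x0))) (at x0)"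
    unfolding at_within_open[OF centre_in_ball[THEN iffD2, OF r(1)] open_ball] by simp
  moreover have "blinfun_apply (integral {0..1} (D x0))
      = (\<lambda>v. integral {0..1} (A x0) * fst v + integral {0..1} (B x0) * snd v)"
    unfolding D_def using slice[OF cA x0] slice[OF cB x0]
    by (intro blinfun_apply_integral_fst_snd) (auto intro: integrable_continuous_interval)
  ultimately show ?thesis by simp
qed

lemma has_derivative_hadamard_integral:
  fixes h :: "real \<times> real \<Rightarrow> real"
  assumes h: "continuous_on W h" and G: "has_partials W h G"
    and G1: "continuous_on W (G (1, 0))" and G2: "continuous_on W (G (0, 1))"
    and U: "open U" and UW: "\<And>p t. p \<in> U \<Longrightarrow> t \<in> {0..1} \<Longrightarrow> (t * fst p, snd p) \<in> W"
    and x0: "x0 \<in> U"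
  shows "(hadamard_integral k h has_derivative
    (\<lambda>v. fst v * hadamard_integral (Suc k) (G (1, 0)) x0 + snd v * hadamard_integral k (G (0, 1)) x0))
    (at x0)"
proof -
  have "((\<lambda>x. integral {0..1} (\<lambda>t. t ^ k * h (t * fst x, snd x))) has_derivative
      (\<lambda>v. integral {0..1} (\<lambda>t. t ^ Suc k * G (1, 0) (t * fst x0, snd x0)) * fst v
        + integral {0..1} (\<lambda>t. t ^ k * G (0, 1) (t * fst x0, snd x0)) * snd v)) (at x0)"
  proof (rule has_derivative_integral_param[OF U x0,
        where A = "\<lambda>x t. t ^ Suc k * G (1, 0) (t * fst x, snd x)"
          and B = "\<lambda>x t. t ^ k * G (0, 1) (t * fst x, snd x)"])
    show "((\<lambda>x. t ^ k * h (t * fst x, snd x)) has_derivative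
        (\<lambda>v. t ^ Suc k * G (1, 0) (t * fst x, snd x) * fst v + t ^ k * G (0, 1) (t * fst x, snd x) * snd v))
        (at x)" if "x \<in> U" "t \<in> {0..1}" for x t
      by (rule has_derivative_segment_integrand[OF G UW[OF that]])
    show "continuous_on (U \<times> {0..1}) (\<lambda>z. snd z ^ k * h (snd z * fst (fst z), snd (fst z)))"
      using continuous_on_segment_integrand[OF h UW] .
    show "continuous_on (U \<times> {0..1}) (\<lambda>z. snd z ^ Suc k * G (1, 0) (snd z * fst (fst z), snd (fst z)))"
      using continuous_on_segment_integrand[OF G1 UW] .
    show "continuous_on (U \<times> {0..1}) (\<lambda>z. snd z ^ k * G (0, 1) (snd z * fst (fst z), snd (fst z)))"
      using continuous_on_segment_integrand[OF G2 UW] .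
  qed
  then show ?thesis
    by (simp add: hadamard_integral_def[abs_def] mult.commute)
qed

lemma smooth_open_hadamard_integral:
  fixes W U :: "(real \<times> real) set" and h :: "real \<times> real \<Rightarrow> real"
  assumes W: "open W" and h: "smooth_open W h" and U: "open U"
    and UW: "\<And>p t. p \<in> U \<Longrightarrow> t \<in> {0..1} \<Longrightarrow> (t * fst p, snd p) \<in> W"
  shows "smooth_open U (hadamard_integral k h)"
proof (rule smooth_open_coinduct[where C = "{hadamard_integral k h | k h. smooth_open W h}"])
  fix g assume "g \<in> {hadamard_integral k h | k h. smooth_open W h}"
  then obtain k' h' where g: "g = hadamard_integral k' h'" and h': "smooth_open W h'" by blast
  obtain G where G: "\<And>b. smooth_open W (G b)" "has_partials W h' G"
    using smooth_open_partials[OF W h'] by blast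
  define Gn where "Gn b = (if b = (1, 0) then hadamard_integral (Suc k') (G (1, 0))
    else hadamard_integral k' (G (0, 1)))" for b :: "real \<times> real"
  have "Gn b \<in> {hadamard_integral k h | k h. smooth_open W h}" for b
    using G(1) unfolding Gn_def by auto
  moreover have "has_partials U g Gn"
    unfolding has_partials_def
  proof
    fix x assume "x \<in> U"
    have "(g has_derivative (\<lambda>v. fst v * hadamard_integral (Suc k') (G (1, 0)) x
        + snd v * hadamard_integral k' (G (0, 1)) x)) (at x)"
      unfolding g using W h' G U UW \<open>x \<in> U\<close>
      by (intro has_derivative_hadamard_integral smooth_open_imp_continuous_on)
    moreover have "(\<lambda>v. fst v * hadamard_integral (Suc k') (G (1, 0)) x
        + snd v * hadamard_integral k' (G (0, 1)) x) = (\<lambda>v. \<Sum>b\<in>Basis. v \<bullet> b * Gn b x)"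
      by (simp add: fun_eq_iff Basis_prod_def Gn_def inner_prod_def)
    ultimately show "(g has_derivative (\<lambda>v. \<Sum>b\<in>Basis. v \<bullet> b * Gn b x)) (at x)"
      by simp
  qed
  ultimately show "\<exists>G. (\<forall>b\<in>Basis. G b \<in> {hadamard_integral k h | k h. smooth_open W h}) \<and>
      has_partials U g G"
    by blast
qed (use h in blast)

lemma hadamard_integral_difference_quotient:
  fixes g :: "real \<times> real \<Rightarrow> real"
  assumes G: "has_partials W g G" and X: "X \<noteq> 0"
    and seg: "\<And>t. t \<in> {0..1} \<Longrightarrow> (t * X, I) \<in> W"
  shows "hadamard_integral 0 (G (1, 0)) (X, I) = (g (X, I) - g (0, I)) / X"
proof -
  have "((\<lambda>t. g (t * X, I)) has_vector_derivative (X * G (1, 0) (t * X, I))) (at t within {0..1})"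
    if "t \<in> {0..1}" for t
  proof -
    have inner: "((\<lambda>t. (t * X, I)) has_derivative (\<lambda>s. (s * X, 0))) (at t within {0..1})"
      by (intro has_derivative_Pair has_derivative_mult_left has_derivative_const has_derivative_ident)
    have outer: "(g has_derivative (\<lambda>w. \<Sum>b\<in>Basis. (w \<bullet> b) * G b (t * X, I))) (at (t * X, I))"
      using G seg[OF that] unfolding has_partials_def by blast
    show ?thesis
      using has_derivative_compose[OF inner outer]
      by (simp add: has_vector_derivative_def Basis_prod_def algebra_simps)
  qed
  from fundamental_theorem_of_calculus[OF zero_le_one this]
  have "((\<lambda>t. X * G (1, 0) (t * X, I)) has_integral g (X, I) - g (0, I)) {0..1}"
    by simp
  then have "integral {0..1} (\<lambda>t. X * G (1, 0) (t * X, I)) = g (X, I) - g (0, I)"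
    by (rule integral_unique)
  with X show ?thesis
    by (simp add: hadamard_integral_def field_simps)
qed

lemma smooth_on_difference_quotient:
  fixes g :: "real \<times> real \<Rightarrow> real"
  assumes g: "smooth_on S g" and seg: "\<And>X I t. (X, I) \<in> S \<Longrightarrow> t \<in> {0..1} \<Longrightarrow> (t * X, I) \<in> S"
  obtains q where "smooth_on S q" "\<And>X I. (X, I) \<in> S \<Longrightarrow> X \<noteq> 0 \<Longrightarrow> q (X, I) = (g (X, I) - g (0, I)) / X"
proof -
  obtain W g' where W: "open W" "S \<subseteq> W" "smooth_open W g'" "\<forall>x\<in>S. g' x = g x"
    using g unfolding smooth_on_def by blast
  obtain G where G: "\<And>b. smooth_open W (G b)" "has_partials W g' G"
    using smooth_open_partials[OF W(1,3)] by blast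
  define T where "T = {p. \<forall>t\<in>{0..1::real}. (t * fst p, snd p) \<in> W}"
  have "open T"
    unfolding T_def by (rule open_segment_tube[OF W(1)])
  moreover have "S \<subseteq> T"
    using seg W(2) by (force simp: T_def)
  moreover have "smooth_open T (hadamard_integral 0 (G (1, 0)))"
    by (rule smooth_open_hadamard_integral[OF W(1) G(1) \<open>open T\<close>]) (simp add: T_def)
  ultimately have "smooth_on S (hadamard_integral 0 (G (1, 0)))"
    unfolding smooth_on_def by blast
  moreover have "hadamard_integral 0 (G (1, 0)) (X, I) = (g (X, I) - g (0, I)) / X"
    if "(X, I) \<in> S" "X \<noteq> 0" for X I
  proof -
    have "(t * X, I) \<in> S" if "t \<in> {0..1}" for t
      using seg \<open>(X, I) \<in> S\<close> that by blast
    with W(2) have "hadamard_integral 0 (G (1, 0)) (X, I) = (g' (X, I) - g' (0, I)) / X"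
      by (intro hadamard_integral_difference_quotient[OF G(2) \<open>X \<noteq> 0\<close>]) blast
    then show ?thesis
      using W(4) that(1) seg[OF that(1), of 0] by simp
  qed
  ultimately show thesis by (rule that)
qed

section \<open>The coordinate change\<close>

definition psi :: "real \<Rightarrow> real \<Rightarrow> real \<times> real \<Rightarrow> real \<times> real" where
  "psi b1 b2 y = ((fst y - b2 + b2 * snd y) / (b1 - b2), (b1 - b1 * snd y - fst y) / (b1 - b2))"

lemma phi_psi:
  assumes "b1 \<noteq> b2"
  shows "phi b1 b2 (psi b1 b2 y) = y"
proof -
  have "b1 - b2 \<noteq> 0" using assms by simp
  then show ?thesis by (cases y) (simp add: phi_def psi_def divide_simps, argo)
qed

lemma psi_phi:
  assumes "b1 \<noteq> b2"
  shows "psi b1 b2 (phi b1 b2 S) = S"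
proof -
  have "b1 - b2 \<noteq> 0" using assms by simp
  then show ?thesis by (cases S) (simp add: phi_def psi_def divide_simps, argo)
qed

lemma phi_in_Pcal: "S \<in> Psig \<Longrightarrow> phi b1 b2 S \<in> Pcal"
  by (cases S) (simp add: phi_def Psig_def Pcal_def)

lemma psi_in_Psig:
  assumes "b1 \<noteq> b2" "y \<in> Pcal"
  shows "psi b1 b2 y \<in> Psig"
proof -
  have "snd (phi b1 b2 (psi b1 b2 y)) \<ge> 0"
    using assms by (simp add: phi_psi Pcal_def split_beta)
  then show ?thesis by (simp add: phi_def Psig_def split_beta)
qed

lemma ball_Pcal_iff_ball_Psig: "b1 \<noteq> b2 \<Longrightarrow> (\<forall>y\<in>Pcal. P y) \<longleftrightarrow> (\<forall>S\<in>Psig. P (phi b1 b2 S))"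
  by (metis phi_in_Pcal phi_psi psi_in_Psig)

lemma phi_inv_eq_psi: "b1 \<noteq> b2 \<Longrightarrow> y \<in> Pcal \<Longrightarrow> phi_inv b1 b2 y = psi b1 b2 y"
  unfolding phi_inv_def
  by (rule inv_into_f_eq) (auto intro: inj_on_inverseI[where g = "psi b1 b2"] psi_phi phi_psi psi_in_Psig)

lemma phi_inv_phi: "b1 \<noteq> b2 \<Longrightarrow> S \<in> Psig \<Longrightarrow> phi_inv b1 b2 (phi b1 b2 S) = S"
  by (simp add: phi_inv_eq_psi phi_in_Pcal psi_phi)

lemma has_derivative_phi:
  "(phi b1 b2 has_derivative (\<lambda>h. (b1 * fst h + b2 * snd h, - fst h - snd h))) (at x)"
  unfolding phi_def[abs_def] by (auto intro!: derivative_eq_intros)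

lemma has_derivative_psi:
  assumes "b1 \<noteq> b2"
  shows "(psi b1 b2 has_derivative
    (\<lambda>h. ((fst h + b2 * snd h) / (b1 - b2), (- b1 * snd h - fst h) / (b1 - b2)))) (at x)"
  using assms unfolding psi_def[abs_def]
  by (auto intro!: derivative_eq_intros simp: diff_divide_distrib add_divide_distrib)

lemma pushforward_phi:
  assumes "b1 \<noteq> b2" "S \<in> Psig"
  shows "pushforward (phi b1 b2) (phi_inv b1 b2) F (phi b1 b2 S)
    = (b1 * fst (F S) + b2 * snd (F S), - fst (F S) - snd (F S))"
  by (simp add: pushforward_def phi_inv_phi[OF assms] frechet_derivative_at[OF has_derivative_phi, symmetric])

lemma fmap_phi:
  assumes "b1 \<noteq> b2" "S \<in> Psig"
  shows "fmap b1 b2 Om1 Om2 g1 g2 (phi b1 b2 S)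
    = b1 * fst (Fvf b1 b2 Om1 Om2 g1 g2 S) + b2 * snd (Fvf b1 b2 Om1 Om2 g1 g2 S)"
  unfolding fmap_def Pfun_def Qfun_def o_def phi_inv_phi[OF assms]
  by (cases S) (simp add: phi_def Fvf_def Ifun_def algebra_simps)

lemma Fvf_sum:
  "fst (Fvf b1 b2 Om1 Om2 g1 g2 S) + snd (Fvf b1 b2 Om1 Om2 g1 g2 S)
    = (g1 + g2 - (b1 * fst S + b2 * snd S)) * (1 - fst S - snd S)"
  by (simp add: Fvf_def Let_def algebra_simps)

lemma pushforward_Fvf:
  assumes "b1 \<noteq> b2" "g1 + g2 = 1" "y \<in> Pcal"
  shows "pushforward (phi b1 b2) (phi_inv b1 b2) (Fvf b1 b2 Om1 Om2 g1 g2) y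
    = Vf (fmap b1 b2 Om1 Om2 g1 g2) y"
proof -
  define S where "S = psi b1 b2 y"
  have S: "S \<in> Psig" and y: "y = phi b1 b2 S"
    using assms by (simp_all add: S_def psi_in_Psig phi_psi)
  have "- fst (Fvf b1 b2 Om1 Om2 g1 g2 S) - snd (Fvf b1 b2 Om1 Om2 g1 g2 S)
      = (fst (phi b1 b2 S) - 1) * snd (phi b1 b2 S)"
    using Fvf_sum[of b1 b2 Om1 Om2 g1 g2 S] assms(2) by (simp add: phi_def algebra_simps)
  then show ?thesis
    unfolding y pushforward_phi[OF assms(1) S] Vf_def fmap_phi[OF assms(1) S] by simp
qed

lemma smooth_on_Ifun: "smooth_on S Ifun"
  unfolding Ifun_def[abs_def] by (intro smooth_on_arith)

lemma smooth_on_comp_phi_inv: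
  assumes "b1 \<noteq> b2" "smooth_on Psig g"
  shows "smooth_on Pcal (g \<circ> phi_inv b1 b2)"
proof -
  have "smooth_on Pcal (\<lambda>y. g (psi b1 b2 y))"
    using assms psi_in_Psig by (intro smooth_on_compose_affine[OF _ has_derivative_psi]) auto
  then show ?thesis
    by (rule smooth_on_cong) (simp add: assms(1) phi_inv_eq_psi)
qed

lemma smooth_on_Pfun: "b1 \<noteq> b2 \<Longrightarrow> smooth_on Psig Om1 \<Longrightarrow> smooth_on Psig Om2 \<Longrightarrow>
    smooth_on Pcal (Pfun b1 b2 Om1 Om2)"
  unfolding Pfun_def by (intro smooth_on_comp_phi_inv smooth_on_arith smooth_on_Ifun)

lemma smooth_on_Qfun: "b1 \<noteq> b2 \<Longrightarrow> smooth_on Psig Om1 \<Longrightarrow> smooth_on Psig Om2 \<Longrightarrow>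
    smooth_on Pcal (Qfun b1 b2 Om1 Om2)"
  unfolding Qfun_def by (intro smooth_on_comp_phi_inv smooth_on_arith smooth_on_Ifun)

lemma smooth_on_fmap: "b1 \<noteq> b2 \<Longrightarrow> smooth_on Psig Om1 \<Longrightarrow> smooth_on Psig Om2 \<Longrightarrow>
    smooth_on Pcal (fmap b1 b2 Om1 Om2 g1 g2)"
  unfolding fmap_def[abs_def] by (intro smooth_on_arith smooth_on_Pfun smooth_on_Qfun)

lemma Fvf_eq_iff_fmap_eq:
  assumes b: "b1 \<noteq> b2" and g: "g1 + g2 = 1" "g1' + g2' = 1"
  shows "(\<forall>S\<in>Psig. Fvf b1 b2 Om1 Om2 g1 g2 S = Fvf b1 b2 Om1' Om2' g1' g2' S)
    \<longleftrightarrow> (\<forall>y\<in>Pcal. fmap b1 b2 Om1 Om2 g1 g2 y = fmap b1 b2 Om1' Om2' g1' g2' y)"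
proof -
  have "Fvf b1 b2 Om1 Om2 g1 g2 S = Fvf b1 b2 Om1' Om2' g1' g2' S
      \<longleftrightarrow> fmap b1 b2 Om1 Om2 g1 g2 (phi b1 b2 S) = fmap b1 b2 Om1' Om2' g1' g2' (phi b1 b2 S)"
    if S: "S \<in> Psig" for S
  proof -
    define u v u' v' where "u = fst (Fvf b1 b2 Om1 Om2 g1 g2 S)" "v = snd (Fvf b1 b2 Om1 Om2 g1 g2 S)"
      "u' = fst (Fvf b1 b2 Om1' Om2' g1' g2' S)" "v' = snd (Fvf b1 b2 Om1' Om2' g1' g2' S)"
    have v: "v = u' + v' - u"
      using Fvf_sum[of b1 b2 Om1 Om2 g1 g2 S] Fvf_sum[of b1 b2 Om1' Om2' g1' g2' S] g
      by (simp add: u_v_u'_v'_def)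
    have "b1 * u + b2 * v - (b1 * u' + b2 * v') = (b1 - b2) * (u - u')"
      by (simp add: v algebra_simps)
    then have "b1 * u + b2 * v = b1 * u' + b2 * v' \<longleftrightarrow> u = u'"
      using b by auto
    then show ?thesis
      by (auto simp: fmap_phi[OF b S] prod_eq_iff u_v_u'_v'_def[symmetric] v)
  qed
  then show ?thesis
    using ball_Pcal_iff_ball_Psig[OF b] by simp
qed

section \<open>The normal form of a replacement number dynamics\<close>

lemma closed_Pcal: "closed Pcal"
proof -
  have "closed {y :: real \<times> real. 0 \<le> snd y}"
    by (intro closed_Collect_le continuous_intros)
  moreover have "Pcal = {y. 0 \<le> snd y}" by (auto simp: Pcal_def)
  ultimately show ?thesis by simp
qed

lemma closure_Pcal_Int_eqI:
  assumes "\<And>y e. y \<in> Pcal \<Longrightarrow> y \<notin> A \<Longrightarrow> e > 0 \<Longrightarrow> \<exists>z\<in>Pcal \<inter> A. dist z y < e"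
  shows "closure (Pcal \<inter> A) = Pcal"
proof
  show "closure (Pcal \<inter> A) \<subseteq> Pcal"
    by (rule closure_minimal) (auto simp: closed_Pcal)
  show "Pcal \<subseteq> closure (Pcal \<inter> A)"
  proof
    fix y assume "y \<in> Pcal"
    show "y \<in> closure (Pcal \<inter> A)"
    proof (cases "y \<in> A")
      case True
      then show ?thesis using \<open>y \<in> Pcal\<close> closure_subset by blast
    next
      case False
      then show ?thesis using assms \<open>y \<in> Pcal\<close> unfolding closure_approachable by blast
    qed
  qed
qed

lemma closure_Pcal_snd_neq: "closure (Pcal \<inter> {y. snd y \<noteq> c}) = Pcal"
proof (rule closure_Pcal_Int_eqI)
  fix y :: "real \<times> real" and e :: real assume "y \<in> Pcal" "y \<notin> {y. snd y \<noteq> c}" "e > 0"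
  then have "(fst y, snd y + e / 2) \<in> Pcal \<inter> {y. snd y \<noteq> c}"
    by (auto simp: Pcal_def split_beta)
  moreover have "dist (fst y, snd y + e / 2) y < e"
    using \<open>e > 0\<close> by (cases y) (simp add: dist_Pair_Pair dist_real_def)
  ultimately show "\<exists>z\<in>Pcal \<inter> {y. snd y \<noteq> c}. dist z y < e" by blast
qed

lemma closure_Pcal_fst_neq: "closure (Pcal \<inter> {y. fst y \<noteq> c}) = Pcal"
proof (rule closure_Pcal_Int_eqI)
  fix y :: "real \<times> real" and e :: real assume "y \<in> Pcal" "y \<notin> {y. fst y \<noteq> c}" "e > 0"
  then have "(fst y + e / 2, snd y) \<in> Pcal \<inter> {y. fst y \<noteq> c}"
    by (auto simp: Pcal_def split_beta)
  moreover have "dist (fst y + e / 2, snd y) y < e"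
    using \<open>e > 0\<close> by (cases y) (simp add: dist_Pair_Pair dist_real_def)
  ultimately show "\<exists>z\<in>Pcal \<inter> {y. fst y \<noteq> c}. dist z y < e" by blast
qed

lemma continuous_on_eq_on_closure:
  fixes F G :: "'a::topological_space \<Rightarrow> 'b::real_normed_vector"
  assumes "continuous_on (closure S) F" "continuous_on (closure S) G"
    and "\<And>x. x \<in> S \<Longrightarrow> F x = G x" "x \<in> closure S"
  shows "F x = G x"
  using continuous_constant_on_closure[of S "\<lambda>x. F x - G x" 0 x] assms
  by (simp add: continuous_on_diff)

lemma normal_form_unique:
  fixes f P Q Qf :: "real \<times> real \<Rightarrow> real" and Pf :: "real \<Rightarrow> real"
  assumes cont: "continuous_on Pcal P" "continuous_on Pcal Q" "continuous_on Pcal Qf"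
      "continuous_on {0..} Pf"
    and f: "\<And>X I. I \<ge> 0 \<Longrightarrow> f (X, I) = f (0, 1) * I + (1 - I) * P (X, I) + X * Q (X, I)"
    and P_indep: "\<And>X I. I \<ge> 0 \<Longrightarrow> P (X, I) = P (0, I)"
    and Qeq: "\<And>X I. I \<ge> 0 \<Longrightarrow> X \<noteq> 0 \<Longrightarrow> Qf (X, I) = (f (X, I) - f (0, I)) / X"
    and Peq: "\<And>I. I \<ge> 0 \<Longrightarrow> I \<noteq> 1 \<Longrightarrow> Pf I = (f (0, I) - f (0, 1) * I) / (1 - I)"
    and y: "y \<in> Pcal"
  shows "P y = Pf (snd y)" "Q y = Qf y"
proof -
  have "continuous_on Pcal (\<lambda>y. Pf (snd y))"
    by (rule continuous_on_compose2[OF cont(4) continuous_on_snd[OF continuous_on_id]])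
      (auto simp: Pcal_def)
  moreover have "P y = Pf (snd y)" if y_in: "y \<in> Pcal \<inter> {y. snd y \<noteq> 1}" for y
  proof -
    obtain X I where y: "y = (X, I)" "I \<ge> 0" "I \<noteq> 1"
      using y_in by (cases y) (auto simp: Pcal_def)
    have "(1 - I) * P (0, I) = f (0, I) - f (0, 1) * I"
      using f[OF \<open>I \<ge> 0\<close>, of 0] by simp
    moreover have "(1 - I) * Pf I = f (0, I) - f (0, 1) * I"
      using Peq[OF y(2,3)] y(3) by simp
    ultimately have "(1 - I) * P (0, I) = (1 - I) * Pf I"
      by (simp only:)
    then have "P (0, I) = Pf I"
      using y(3) by simp
    then show ?thesis
      using P_indep[OF y(2)] y(1) by simp
  qed
  ultimately have P: "P y = Pf (snd y)" if "y \<in> Pcal" for y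
    using continuous_on_eq_on_closure[of "Pcal \<inter> {y. snd y \<noteq> 1}" P "\<lambda>y. Pf (snd y)"] cont(1) that
    unfolding closure_Pcal_snd_neq by blast
  have "Q y = Qf y" if y_in: "y \<in> Pcal \<inter> {y. fst y \<noteq> 0}" for y
  proof -
    obtain X I where y: "y = (X, I)" "I \<ge> 0" "X \<noteq> 0"
      using y_in by (cases y) (auto simp: Pcal_def)
    have "f (X, I) - f (0, I) = X * Q (X, I)"
      using f[OF \<open>I \<ge> 0\<close>, of X] f[OF \<open>I \<ge> 0\<close>, of 0] P_indep[OF y(2), of X] by simp
    then show ?thesis
      using Qeq[OF y(2,3)] y by simp
  qed
  then have "Q y = Qf y" if "y \<in> Pcal" for y
    using continuous_on_eq_on_closure[of "Pcal \<inter> {y. fst y \<noteq> 0}" Q Qf] cont(2,3) that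
    unfolding closure_Pcal_fst_neq by blast
  with P y show "P y = Pf (snd y)" "Q y = Qf y" by blast+
qed

lemma normal_form_decomposition:
  fixes f Qf :: "real \<times> real \<Rightarrow> real" and Pf :: "real \<Rightarrow> real"
  assumes Qeq: "\<And>X I. I \<ge> 0 \<Longrightarrow> X \<noteq> 0 \<Longrightarrow> Qf (X, I) = (f (X, I) - f (0, I)) / X"
    and Peq: "\<And>I. I \<ge> 0 \<Longrightarrow> I \<noteq> 1 \<Longrightarrow> Pf I = (f (0, I) - f (0, 1) * I) / (1 - I)"
    and I: "I \<ge> 0"
  shows "f (0, 1) * I + (1 - I) * Pf I + X * Qf (X, I) = f (X, I)"
proof -
  have P: "(1 - I) * Pf I = f (0, I) - f (0, 1) * I"
    using Peq[OF I] by (cases "I = 1") simp_all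
  have "X * Qf (X, I) = f (X, I) - f (0, I)"
    using Qeq[OF I] by (cases "X = 0") simp_all
  with P show ?thesis by simp
qed

lemma smooth_normal_form_quotients:
  fixes f :: "real \<times> real \<Rightarrow> real"
  assumes f: "smooth_on Pcal f"
  obtains Qf Pf where "smooth_on Pcal Qf" "smooth_on {0..} Pf"
    "\<And>X I. I \<ge> 0 \<Longrightarrow> X \<noteq> 0 \<Longrightarrow> Qf (X, I) = (f (X, I) - f (0, I)) / X"
    "\<And>I. I \<ge> 0 \<Longrightarrow> I \<noteq> 1 \<Longrightarrow> Pf I = (f (0, I) - f (0, 1) * I) / (1 - I)"
proof -
  obtain Qf where Qf: "smooth_on Pcal Qf"
    "\<And>X I. (X, I) \<in> Pcal \<Longrightarrow> X \<noteq> 0 \<Longrightarrow> Qf (X, I) = (f (X, I) - f (0, I)) / X"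
    using smooth_on_difference_quotient[OF f] by (auto simp: Pcal_def)
  \<comment> \<open>P is built from the difference quotient of I \<mapsto> f (0, I) at I = 1, moved to the origin.\<close>
  define S where "S = {p :: real \<times> real. fst p \<ge> -1}"
  have "smooth_on S (\<lambda>p. f (0, 1 + fst p))"
    using f by (rule smooth_on_compose_affine) (auto intro!: derivative_eq_intros simp: S_def Pcal_def)
  moreover have "(t * X, I) \<in> S" if "(X, I) \<in> S" "t \<in> {0..1}" for X I t
  proof -
    have "0 \<le> t * (X + 1) + (1 - t)" using that by (simp add: S_def)
    then show ?thesis by (simp add: S_def algebra_simps)
  qed
  ultimately obtain q where q: "smooth_on S q"
    "\<And>X I. (X, I) \<in> S \<Longrightarrow> X \<noteq> 0 \<Longrightarrow> q (X, I) = (f (0, 1 + X) - f (0, 1)) / X"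
    by (rule smooth_on_difference_quotient) simp_all
  define Pf where "Pf I = f (0, 1) - q (I - 1, 0)" for I
  have "smooth_on {0..} (\<lambda>I. q (I - 1, 0))"
    using q(1) by (rule smooth_on_compose_affine) (auto intro!: derivative_eq_intros simp: S_def)
  then have "smooth_on {0..} Pf"
    unfolding Pf_def[abs_def] by (intro smooth_on_arith)
  moreover have "Pf I = (f (0, I) - f (0, 1) * I) / (1 - I)" if "I \<ge> 0" "I \<noteq> 1" for I
  proof -
    have "q (I - 1, 0) = (f (0, I) - f (0, 1)) / (I - 1)"
      using q(2)[of "I - 1" 0] that by (simp add: S_def)
    with that show ?thesis by (simp add: Pf_def field_simps)
  qed
  ultimately show thesis
    using Qf by (intro that[of Qf Pf]) (auto simp: Pcal_def)
qed

lemma gamma_linear_system: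
  fixes b1 b2 g1 g2 l :: real
  assumes "b1 \<noteq> b2"
  shows "(g1 + g2 = 1 \<and> b1 * g1 + b2 * g2 = l)
    \<longleftrightarrow> (g1 = (l - b2) / (b1 - b2) \<and> g2 = (b1 - l) / (b1 - b2))"
proof
  assume sys: "g1 + g2 = 1 \<and> b1 * g1 + b2 * g2 = l"
  then have g2: "g2 = 1 - g1" by simp
  with sys have "g1 * (b1 - b2) = l - b2"
    by (simp add: algebra_simps)
  with assms have g1: "g1 = (l - b2) / (b1 - b2)"
    by (simp add: eq_divide_eq)
  have "g2 = (b1 - l) / (b1 - b2)"
    unfolding g2 g1 using assms by (simp add: field_simps)
  with g1 show "g1 = (l - b2) / (b1 - b2) \<and> g2 = (b1 - l) / (b1 - b2)" ..
next
  assume "g1 = (l - b2) / (b1 - b2) \<and> g2 = (b1 - l) / (b1 - b2)"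
  then have g1: "g1 = (l - b2) / (b1 - b2)" and g2: "g2 = (b1 - l) / (b1 - b2)" by simp_all
  have "g1 + g2 = ((l - b2) + (b1 - l)) / (b1 - b2)"
    unfolding g1 g2 by (rule add_divide_distrib[symmetric])
  moreover have "b1 * g1 + b2 * g2 = (l * (b1 - b2)) / (b1 - b2)"
    unfolding g1 g2 by (simp add: add_divide_distrib[symmetric] algebra_simps)
  ultimately show "g1 + g2 = 1 \<and> b1 * g1 + b2 * g2 = l"
    using assms by simp
qed

lemma Omega_linear_system:
  fixes b1 b2 o1 o2 p q i :: real
  assumes "b1 \<noteq> b2"
  shows "(p = b1 * o2 + b2 * o1 + b1 * b2 * i \<and> q = - (o1 + o2 + (b1 + b2) * i))
    \<longleftrightarrow> (o1 = (p + b1 * q + b1\<^sup>2 * i) / (b2 - b1) \<and> o2 = (p + b2 * q + b2\<^sup>2 * i) / (b1 - b2))"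
proof -
  have "(p = b1 * o2 + b2 * o1 + b1 * b2 * i \<and> q = - (o1 + o2 + (b1 + b2) * i))
    \<longleftrightarrow> (o1 * (b2 - b1) = p + b1 * q + b1\<^sup>2 * i \<and> o2 * (b1 - b2) = p + b2 * q + b2\<^sup>2 * i)"
    (is "?PQ \<longleftrightarrow> ?E1 \<and> ?E2")
  proof
    assume ?PQ
    then have p: "p = b1 * o2 + b2 * o1 + b1 * b2 * i" and q: "q = - (o1 + o2 + (b1 + b2) * i)"
      by simp_all
    show "?E1 \<and> ?E2"
      unfolding p q by (simp add: algebra_simps power2_eq_square)
  next
    assume E: "?E1 \<and> ?E2"
    have "(b1 - b2) * (q + (o1 + o2 + (b1 + b2) * i))
        = (p + b1 * q + b1\<^sup>2 * i - o1 * (b2 - b1)) - (p + b2 * q + b2\<^sup>2 * i - o2 * (b1 - b2))"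
      by (simp add: algebra_simps power2_eq_square)
    with E assms have q: "q = - (o1 + o2 + (b1 + b2) * i)"
      by simp
    with E have "p = b1 * o2 + b2 * o1 + b1 * b2 * i"
      by (simp add: algebra_simps power2_eq_square)
    with q show ?PQ by blast
  qed
  also have "\<dots> \<longleftrightarrow> (o1 = (p + b1 * q + b1\<^sup>2 * i) / (b2 - b1) \<and> o2 = (p + b2 * q + b2\<^sup>2 * i) / (b1 - b2))"
    using assms by (simp add: eq_divide_eq)
  finally show ?thesis .
qed

lemma Pfun_eq:
  assumes "b1 \<noteq> b2" "y \<in> Pcal"
  shows "Pfun b1 b2 Om1 Om2 y = b1 * Om2 (psi b1 b2 y) + b2 * Om1 (psi b1 b2 y) + b1 * b2 * snd y"
proof -
  have "Ifun (psi b1 b2 y) = snd (phi b1 b2 (psi b1 b2 y))"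
    by (simp add: Ifun_def phi_def)
  then show ?thesis
    using assms by (simp add: Pfun_def phi_inv_eq_psi phi_psi)
qed

lemma Qfun_eq:
  assumes "b1 \<noteq> b2" "y \<in> Pcal"
  shows "Qfun b1 b2 Om1 Om2 y = - (Om1 (psi b1 b2 y) + Om2 (psi b1 b2 y) + (b1 + b2) * snd y)"
proof -
  have "Ifun (psi b1 b2 y) = snd (phi b1 b2 (psi b1 b2 y))"
    by (simp add: Ifun_def phi_def)
  then show ?thesis
    using assms by (simp add: Qfun_def phi_inv_eq_psi phi_psi)
qed

lemma Omega_formulas_iff:
  fixes Qf :: "real \<times> real \<Rightarrow> real" and Pf :: "real \<Rightarrow> real"
  assumes b: "b1 \<noteq> b2"
  shows "((\<forall>S\<in>Psig. Om1 S = (\<lambda>y. (Pf (snd y) + b1 * Qf y + b1\<^sup>2 * snd y) / (b2 - b1)) (phi b1 b2 S)) \<and>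
          (\<forall>S\<in>Psig. Om2 S = (\<lambda>y. (Pf (snd y) + b2 * Qf y + b2\<^sup>2 * snd y) / (b1 - b2)) (phi b1 b2 S)))
    \<longleftrightarrow> (\<forall>y\<in>Pcal. Pf (snd y) = Pfun b1 b2 Om1 Om2 y \<and> Qf y = Qfun b1 b2 Om1 Om2 y)"
proof -
  have "(Pf (snd y) = Pfun b1 b2 Om1 Om2 y \<and> Qf y = Qfun b1 b2 Om1 Om2 y) \<longleftrightarrow>
      Om1 (psi b1 b2 y) = (Pf (snd y) + b1 * Qf y + b1\<^sup>2 * snd y) / (b2 - b1) \<and>
      Om2 (psi b1 b2 y) = (Pf (snd y) + b2 * Qf y + b2\<^sup>2 * snd y) / (b1 - b2)"
    if "y \<in> Pcal" for y
    unfolding Pfun_eq[OF b that] Qfun_eq[OF b that] by (rule Omega_linear_system[OF b])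
  then show ?thesis
    unfolding ball_Pcal_iff_ball_Psig[OF b] by (simp add: psi_phi[OF b] phi_in_Pcal ball_conj_distrib)
qed

lemma pushforward_eq_Vf_iff:
  assumes "b1 \<noteq> b2" "g1 + g2 = 1"
  shows "(\<forall>y\<in>Pcal. pushforward (phi b1 b2) (phi_inv b1 b2) (Fvf b1 b2 Om1 Om2 g1 g2) y = Vf f y)
    \<longleftrightarrow> (\<forall>y\<in>Pcal. fmap b1 b2 Om1 Om2 g1 g2 y = f y)"
  using assms by (simp add: pushforward_Fvf Vf_def)

definition normalized_realization ::
    "real \<Rightarrow> real \<Rightarrow> (real \<times> real \<Rightarrow> real) \<Rightarrow> (real \<times> real \<Rightarrow> real) \<Rightarrow> (real \<times> real \<Rightarrow> real)
      \<Rightarrow> real \<Rightarrow> real \<Rightarrow> bool" where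
  "normalized_realization b1 b2 f Om1 Om2 g1 g2 \<longleftrightarrow> admissible Om1 Om2 g1 g2 \<and>
    (\<forall>X X' I. I \<ge> 0 \<longrightarrow> Pfun b1 b2 Om1 Om2 (X, I) = Pfun b1 b2 Om1 Om2 (X', I)) \<and>
    (\<forall>y\<in>Pcal. pushforward (phi b1 b2) (phi_inv b1 b2) (Fvf b1 b2 Om1 Om2 g1 g2) y = Vf f y)"

definition parameters_from_quotients ::
    "real \<Rightarrow> real \<Rightarrow> (real \<times> real \<Rightarrow> real) \<Rightarrow> (real \<Rightarrow> real) \<Rightarrow> (real \<times> real \<Rightarrow> real)
      \<Rightarrow> (real \<times> real \<Rightarrow> real) \<Rightarrow> (real \<times> real \<Rightarrow> real) \<Rightarrow> real \<Rightarrow> real \<Rightarrow> bool" where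
  "parameters_from_quotients b1 b2 f Pf Qf Om1 Om2 g1 g2 \<longleftrightarrow>
    (\<forall>S\<in>Psig. Om1 S = (\<lambda>y. (Pf (snd y) + b1 * Qf y + b1\<^sup>2 * snd y) / (b2 - b1)) (phi b1 b2 S)) \<and>
    (\<forall>S\<in>Psig. Om2 S = (\<lambda>y. (Pf (snd y) + b2 * Qf y + b2\<^sup>2 * snd y) / (b1 - b2)) (phi b1 b2 S)) \<and>
    g1 = (f (0, 1) - b2) / (b1 - b2) \<and> g2 = (b1 - f (0, 1)) / (b1 - b2)"

lemma normal_form_necessary:
  fixes f Qf :: "real \<times> real \<Rightarrow> real" and Pf :: "real \<Rightarrow> real"
  assumes b: "b1 \<noteq> b2" and Q: "smooth_on Pcal Qf" and P: "smooth_on {0..} Pf"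
    and Qeq: "\<And>X I. I \<ge> 0 \<Longrightarrow> X \<noteq> 0 \<Longrightarrow> Qf (X, I) = (f (X, I) - f (0, I)) / X"
    and Peq: "\<And>I. I \<ge> 0 \<Longrightarrow> I \<noteq> 1 \<Longrightarrow> Pf I = (f (0, I) - f (0, 1) * I) / (1 - I)"
    and real: "normalized_realization b1 b2 f Om1 Om2 g1 g2"
  shows "parameters_from_quotients b1 b2 f Pf Qf Om1 Om2 g1 g2"
proof -
  have g: "g1 + g2 = 1" and Om: "smooth_on Psig Om1" "smooth_on Psig Om2"
    and indep: "\<And>X I. I \<ge> 0 \<Longrightarrow> Pfun b1 b2 Om1 Om2 (X, I) = Pfun b1 b2 Om1 Om2 (0, I)"
    and push: "\<forall>y\<in>Pcal. pushforward (phi b1 b2) (phi_inv b1 b2) (Fvf b1 b2 Om1 Om2 g1 g2) y = Vf f y"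
    using real by (simp_all add: normalized_realization_def admissible_def)
  have fm: "fmap b1 b2 Om1 Om2 g1 g2 (X, I) = f (X, I)" if "I \<ge> 0" for X I
    using push that unfolding pushforward_eq_Vf_iff[OF b g] by (simp add: Pcal_def)
  have lambda: "b1 * g1 + b2 * g2 = f (0, 1)"
    using fm[of 1 0] by (simp add: fmap_def)
  have "\<forall>y\<in>Pcal. Pf (snd y) = Pfun b1 b2 Om1 Om2 y \<and> Qf y = Qfun b1 b2 Om1 Om2 y"
  proof
    fix y assume "y \<in> Pcal"
    have "f (X, I) = f (0, 1) * I + (1 - I) * Pfun b1 b2 Om1 Om2 (X, I) + X * Qfun b1 b2 Om1 Om2 (X, I)"
      if "I \<ge> 0" for X I
      using fm[OF that, of X] by (simp add: fmap_def lambda)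
    from normal_form_unique[OF _ _ _ _ this indep Qeq Peq \<open>y \<in> Pcal\<close>] Q P
    show "Pf (snd y) = Pfun b1 b2 Om1 Om2 y \<and> Qf y = Qfun b1 b2 Om1 Om2 y"
      by (simp add: smooth_on_imp_continuous_on smooth_on_Pfun[OF b Om] smooth_on_Qfun[OF b Om])
  qed
  with g lambda show ?thesis
    by (simp add: parameters_from_quotients_def Omega_formulas_iff[OF b]
        gamma_linear_system[OF b, symmetric])
qed

lemma normal_form_sufficient:
  fixes f Qf :: "real \<times> real \<Rightarrow> real" and Pf :: "real \<Rightarrow> real"
  assumes b: "b1 \<noteq> b2" and Q: "smooth_on Pcal Qf" and P: "smooth_on {0..} Pf"
    and Qeq: "\<And>X I. I \<ge> 0 \<Longrightarrow> X \<noteq> 0 \<Longrightarrow> Qf (X, I) = (f (X, I) - f (0, I)) / X"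
    and Peq: "\<And>I. I \<ge> 0 \<Longrightarrow> I \<noteq> 1 \<Longrightarrow> Pf I = (f (0, I) - f (0, 1) * I) / (1 - I)"
    and param: "parameters_from_quotients b1 b2 f Pf Qf Om1 Om2 g1 g2"
  shows "normalized_realization b1 b2 f Om1 Om2 g1 g2"
proof -
  have Om1: "\<forall>S\<in>Psig. Om1 S = (\<lambda>y. (Pf (snd y) + b1 * Qf y + b1\<^sup>2 * snd y) / (b2 - b1)) (phi b1 b2 S)"
    and Om2: "\<forall>S\<in>Psig. Om2 S = (\<lambda>y. (Pf (snd y) + b2 * Qf y + b2\<^sup>2 * snd y) / (b1 - b2)) (phi b1 b2 S)"
    and g12: "g1 = (f (0, 1) - b2) / (b1 - b2) \<and> g2 = (b1 - f (0, 1)) / (b1 - b2)"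
    using param by (simp_all add: parameters_from_quotients_def)
  have g: "g1 + g2 = 1" and lambda: "b1 * g1 + b2 * g2 = f (0, 1)"
    using gamma_linear_system[OF b] g12 by blast+
  have "\<forall>y\<in>Pcal. Pf (snd y) = Pfun b1 b2 Om1 Om2 y \<and> Qf y = Qfun b1 b2 Om1 Om2 y"
    by (rule Omega_formulas_iff[OF b, THEN iffD1]) (use Om1 Om2 in blast)
  then have PQ: "Pfun b1 b2 Om1 Om2 y = Pf (snd y) \<and> Qfun b1 b2 Om1 Om2 y = Qf y" if "y \<in> Pcal" for y
    using that by simp
  have "smooth_on Pcal (\<lambda>y. Pf (snd y))"
    using P by (rule smooth_on_compose_affine[OF _ has_derivative_snd[OF has_derivative_ident]])
      (auto simp: Pcal_def)
  then have "smooth_on Pcal (\<lambda>y. (Pf (snd y) + b * Qf y + b\<^sup>2 * snd y) / c)" for b c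
    using Q by (intro smooth_on_arith)
  then have comp: "smooth_on Psig (\<lambda>S. (\<lambda>y. (Pf (snd y) + b * Qf y + b\<^sup>2 * snd y) / c) (phi b1 b2 S))" for b c
    by (rule smooth_on_compose_affine[OF _ has_derivative_phi]) (auto intro: phi_in_Pcal)
  have "smooth_on Psig Om1" "smooth_on Psig Om2"
    using smooth_on_cong[OF comp[of b1 "b2 - b1"]] smooth_on_cong[OF comp[of b2 "b1 - b2"]] Om1 Om2
    by simp_all
  moreover have "fmap b1 b2 Om1 Om2 g1 g2 y = f y" if "y \<in> Pcal" for y
    using that normal_form_decomposition[OF Qeq Peq, of "snd y" "fst y"]
    by (simp add: fmap_def lambda PQ[OF that] Pcal_def split_beta)
  ultimately show ?thesis
    unfolding normalized_realization_def admissible_def pushforward_eq_Vf_iff[OF b g]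
    using g PQ by (simp add: Pcal_def)
qed

lemma normal_form_exists_unique:
  fixes f :: "real \<times> real \<Rightarrow> real"
  assumes b: "b1 \<noteq> b2" and f: "smooth_on Pcal f"
  shows "\<exists>Qf Pf. smooth_on Pcal Qf \<and> smooth_on {0..} Pf \<and>
    (\<forall>X I. I \<ge> 0 \<longrightarrow> X \<noteq> 0 \<longrightarrow> Qf (X, I) = (f (X, I) - f (0, I)) / X) \<and>
    (\<forall>I. I \<ge> 0 \<longrightarrow> I \<noteq> 1 \<longrightarrow> Pf I = (f (0, I) - f (0, 1) * I) / (1 - I)) \<and>
    (\<exists>Om1 Om2 g1 g2. normalized_realization b1 b2 f Om1 Om2 g1 g2) \<and>
    (\<forall>Om1 Om2 g1 g2. normalized_realization b1 b2 f Om1 Om2 g1 g2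
      \<longleftrightarrow> parameters_from_quotients b1 b2 f Pf Qf Om1 Om2 g1 g2)"
proof -
  obtain Qf Pf where QP: "smooth_on Pcal Qf" "smooth_on {0..} Pf"
    "\<And>X I. I \<ge> 0 \<Longrightarrow> X \<noteq> 0 \<Longrightarrow> Qf (X, I) = (f (X, I) - f (0, I)) / X"
    "\<And>I. I \<ge> 0 \<Longrightarrow> I \<noteq> 1 \<Longrightarrow> Pf I = (f (0, I) - f (0, 1) * I) / (1 - I)"
    using smooth_normal_form_quotients[OF f] by blast
  have "parameters_from_quotients b1 b2 f Pf Qf
      (\<lambda>S. (Pf (snd (phi b1 b2 S)) + b1 * Qf (phi b1 b2 S) + b1\<^sup>2 * snd (phi b1 b2 S)) / (b2 - b1))
      (\<lambda>S. (Pf (snd (phi b1 b2 S)) + b2 * Qf (phi b1 b2 S) + b2\<^sup>2 * snd (phi b1 b2 S)) / (b1 - b2))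
      ((f (0, 1) - b2) / (b1 - b2)) ((b1 - f (0, 1)) / (b1 - b2))"
    by (simp add: parameters_from_quotients_def)
  then have "\<exists>Om1 Om2 g1 g2. normalized_realization b1 b2 f Om1 Om2 g1 g2"
    by (blast intro: normal_form_sufficient[OF b QP])
  with QP normal_form_necessary[OF b QP] normal_form_sufficient[OF b QP] show ?thesis
    by (intro exI[of _ Qf] exI[of _ Pf]) blast
qed

lemma fmap_surjective:
  assumes b: "b1 \<noteq> b2" and f: "smooth_on Pcal f"
  shows "\<exists>Om1 Om2 g1 g2. admissible Om1 Om2 g1 g2 \<and> (\<forall>y\<in>Pcal. fmap b1 b2 Om1 Om2 g1 g2 y = f y)"
proof -
  obtain Om1 Om2 g1 g2 where "normalized_realization b1 b2 f Om1 Om2 g1 g2"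
    using normal_form_exists_unique[OF b f] by blast
  then have "admissible Om1 Om2 g1 g2" "\<forall>y\<in>Pcal. fmap b1 b2 Om1 Om2 g1 g2 y = f y"
    unfolding normalized_realization_def admissible_def
    by (auto simp: pushforward_eq_Vf_iff[OF b])
  then show ?thesis by blast
qed

theorem theorem3p8:
  fixes b1 b2 :: real
  assumes "b1 > b2"
  shows
   \<comment> \<open>(i)\<close>
   "(\<forall>Om1 Om2 g1 g2. admissible Om1 Om2 g1 g2 \<longrightarrow>
       (\<forall>y\<in>Pcal. pushforward (phi b1 b2) (phi_inv b1 b2) (Fvf b1 b2 Om1 Om2 g1 g2) y
                   = Vf (fmap b1 b2 Om1 Om2 g1 g2) y))
    \<and>
   \<comment> \<open>(ii): well-defined map into C-infinity(Pcal), injective and surjective\<close>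
    (\<forall>Om1 Om2 g1 g2. admissible Om1 Om2 g1 g2 \<longrightarrow> smooth_on Pcal (fmap b1 b2 Om1 Om2 g1 g2))
    \<and>
    (\<forall>Om1 Om2 g1 g2 Om1' Om2' g1' g2'.
       admissible Om1 Om2 g1 g2 \<longrightarrow> admissible Om1' Om2' g1' g2' \<longrightarrow>
       ((\<forall>x\<in>Psig. Fvf b1 b2 Om1 Om2 g1 g2 x = Fvf b1 b2 Om1' Om2' g1' g2' x)
        \<longleftrightarrow> (\<forall>y\<in>Pcal. fmap b1 b2 Om1 Om2 g1 g2 y = fmap b1 b2 Om1' Om2' g1' g2' y)))
    \<and>
    (\<forall>f. smooth_on Pcal f \<longrightarrow>
       (\<exists>Om1 Om2 g1 g2. admissible Om1 Om2 g1 g2 \<and>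
          (\<forall>y\<in>Pcal. fmap b1 b2 Om1 Om2 g1 g2 y = f y)))
    \<and>
   \<comment> \<open>(iii)\<close>
    (\<forall>f. smooth_on Pcal f \<longrightarrow>
       (\<exists>Qf :: real \<times> real \<Rightarrow> real. \<exists>Pf :: real \<Rightarrow> real.
          smooth_on Pcal Qf \<and> smooth_on {0..} Pf \<and>
          (\<forall>X I. I \<ge> 0 \<longrightarrow> X \<noteq> 0 \<longrightarrow> Qf (X, I) = (f (X, I) - f (0, I)) / X) \<and>
          (\<forall>I. I \<ge> 0 \<longrightarrow> I \<noteq> 1 \<longrightarrow> Pf I = (f (0, I) - f (0, 1) * I) / (1 - I)) \<and>
          (\<exists>Om1 Om2 g1 g2. admissible Om1 Om2 g1 g2 \<and>
             (\<forall>X X' I. I \<ge> 0 \<longrightarrow> Pfun b1 b2 Om1 Om2 (X, I) = Pfun b1 b2 Om1 Om2 (X', I)) \<and>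
             (\<forall>y\<in>Pcal. pushforward (phi b1 b2) (phi_inv b1 b2) (Fvf b1 b2 Om1 Om2 g1 g2) y = Vf f y)) \<and>
          (\<forall>Om1 Om2 g1 g2.
             (admissible Om1 Om2 g1 g2 \<and>
              (\<forall>X X' I. I \<ge> 0 \<longrightarrow> Pfun b1 b2 Om1 Om2 (X, I) = Pfun b1 b2 Om1 Om2 (X', I)) \<and>
              (\<forall>y\<in>Pcal. pushforward (phi b1 b2) (phi_inv b1 b2) (Fvf b1 b2 Om1 Om2 g1 g2) y = Vf f y))
             \<longleftrightarrow>
             ((\<forall>S\<in>Psig. Om1 S = (\<lambda>y. (Pf (snd y) + b1 * Qf y + b1\<^sup>2 * snd y) / (b2 - b1)) (phi b1 b2 S)) \<and>
              (\<forall>S\<in>Psig. Om2 S = (\<lambda>y. (Pf (snd y) + b2 * Qf y + b2\<^sup>2 * snd y) / (b1 - b2)) (phi b1 b2 S)) \<and>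
              g1 = (f (0, 1) - b2) / (b1 - b2) \<and>
              g2 = (b1 - f (0, 1)) / (b1 - b2)))))"
proof -
  have b: "b1 \<noteq> b2" using assms by simp
  show ?thesis
    using pushforward_Fvf[OF b] smooth_on_fmap[OF b] Fvf_eq_iff_fmap_eq[OF b] fmap_surjective[OF b]
      normal_form_exists_unique[OF b]
    unfolding normalized_realization_def parameters_from_quotients_def admissible_def
    by blast
qed

end
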